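(* There is an absolute constant $d$ such that for every finite simple digraph $H$, every positive integer $k$, and every tournament $T$ that does not contain $k$ pairwise vertex-disjoint topological minor copies of $H$, we have $\mathrm{pw}(T)\le d\,\|H\|\,k$.
   Context: All digraphs are finite and simple; $\|H\|:=|V(H)|+|A(H)|$. A tournament is a simple digraph with exactly one arc between every pair of distinct vertices. A topological minor copy of $H$ in $T$ is a subgraph $\widehat H$ of $T$ together with a map sending vertices of $H$ to distinct vertices of $\widehat H$ and arcs $(u,v)$ of $H$ to directed paths from the image of $u$ to the image of $v$ that are internally vertex-disjoint, avoid images of vertices of $H$ in their interiors, and together cover all arcs and all non-image vertices of $\widehat H$ exactly once. An interval decomposition of a tournament $T$ is a map $I$ assigning to each vertex a nonempty closed interval $[\alpha,\beta]$ with integer endpoints, such that whenever $\max I(u)<\min I(v)$, the arc between $u$ and $v$ is $(u,v)$. Its width is $\max_{\alpha\in\mathbb{Z}}|\{v: \alpha\in I(v)\}|$, and the pathwidth $\mathrm{pw}(T)$ is the minimum width of an interval decomposition of $T$. *)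

theory Defs
  imports Complex_Main
begin

definition simple_digraph :: "'a set \<Rightarrow> ('a \<times> 'a) set \<Rightarrow> bool" where
  "simple_digraph V A \<longleftrightarrow> finite V \<and> A \<subseteq> V \<times> V \<and> (\<forall>x. (x, x) \<notin> A)"

definition tournament :: "'a set \<Rightarrow> ('a \<times> 'a) set \<Rightarrow> bool" where
  "tournament V A \<longleftrightarrow> simple_digraph V A \<and>
     (\<forall>x\<in>V. \<forall>y\<in>V. x \<noteq> y \<longrightarrow> ((x, y) \<in> A \<longleftrightarrow> (y, x) \<notin> A))"

definition dipath :: "('a \<times> 'a) set \<Rightarrow> 'a list \<Rightarrow> bool" where
  "dipath A p \<longleftrightarrow> distinct p \<and> 2 \<le> length p \<and>
     (\<forall>i. Suc i < length p \<longrightarrow> (p ! i, p ! Suc i) \<in> A)"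

definition interior :: "'a list \<Rightarrow> 'a set" where
  "interior p = set (butlast (tl p))"

definition top_minor_copy ::
  "'b set \<Rightarrow> ('b \<times> 'b) set \<Rightarrow> 'a set \<Rightarrow> ('a \<times> 'a) set \<Rightarrow> ('b \<Rightarrow> 'a) \<Rightarrow> ('b \<times> 'b \<Rightarrow> 'a list) \<Rightarrow> bool" where
  "top_minor_copy VH AH V A f P \<longleftrightarrow>
     inj_on f VH \<and> f ` VH \<subseteq> V \<and>
     (\<forall>e\<in>AH. dipath A (P e) \<and> set (P e) \<subseteq> V \<and>
        hd (P e) = f (fst e) \<and> last (P e) = f (snd e) \<and> interior (P e) \<inter> f ` VH = {}) \<and>
     (\<forall>e\<in>AH. \<forall>e'\<in>AH. e \<noteq> e' \<longrightarrow> interior (P e) \<inter> interior (P e') = {})"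

definition copy_verts :: "'b set \<Rightarrow> ('b \<times> 'b) set \<Rightarrow> ('b \<Rightarrow> 'a) \<Rightarrow> ('b \<times> 'b \<Rightarrow> 'a list) \<Rightarrow> 'a set" where
  "copy_verts VH AH f P = f ` VH \<union> (\<Union>e\<in>AH. set (P e))"

definition has_k_disjoint_copies ::
  "'b set \<Rightarrow> ('b \<times> 'b) set \<Rightarrow> nat \<Rightarrow> 'a set \<Rightarrow> ('a \<times> 'a) set \<Rightarrow> bool" where
  "has_k_disjoint_copies VH AH k V A \<longleftrightarrow>
     (\<exists>(f :: nat \<Rightarrow> 'b \<Rightarrow> 'a) (P :: nat \<Rightarrow> 'b \<times> 'b \<Rightarrow> 'a list).
        (\<forall>i<k. top_minor_copy VH AH V A (f i) (P i)) \<and>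
        (\<forall>i<k. \<forall>j<k. i \<noteq> j \<longrightarrow> copy_verts VH AH (f i) (P i) \<inter> copy_verts VH AH (f j) (P j) = {}))"

text \<open>Interval decompositions: I v = (alpha, beta) encodes the closed integer interval.\<close>
definition interval_decomp :: "'a set \<Rightarrow> ('a \<times> 'a) set \<Rightarrow> ('a \<Rightarrow> int \<times> int) \<Rightarrow> bool" where
  "interval_decomp V A I \<longleftrightarrow>
     (\<forall>v\<in>V. fst (I v) \<le> snd (I v)) \<and>
     (\<forall>u\<in>V. \<forall>v\<in>V. snd (I u) < fst (I v) \<longrightarrow> (u, v) \<in> A)"

definition decomp_width :: "'a set \<Rightarrow> ('a \<Rightarrow> int \<times> int) \<Rightarrow> nat" where
  "decomp_width V I = Max ((\<lambda>\<alpha>. card {v\<in>V. fst (I v) \<le> \<alpha> \<and> \<alpha> \<le> snd (I v)}) ` UNIV)"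

definition pathwidth :: "'a set \<Rightarrow> ('a \<times> 'a) set \<Rightarrow> nat" where
  "pathwidth V A = Min {decomp_width V I | I. interval_decomp V A I}"

end

theory Submission
  imports Defs
begin

text \<open>
  Call a vertex set J of a tournament N-linked if any two of its vertices are joined by a path
  with at most three interior vertices avoiding any N given vertices. Such paths can be routed
  greedily, so a linked set with k|V(H)| vertices, N = 3k\<parallel>H\<parallel>, carries k disjoint
  topological minor copies of H. Without such copies, linked sets have fewer than N vertices,
  and hence so do two kinds of linked sets: vertices whose scores lie in a short window, and
  the heads of a matching of arcs that raise the score by much.

  For a threshold \<sigma>, pick a vertex set cut \<sigma> of minimum cost, where the cost counts the
  vertices entered by an arc from outside, the vertices of score below \<sigma> inside, and the
  vertices of score at least \<sigma> outside. A maximal matching of the arcs crossing \<sigma> upwards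
  is either large, which yields a large linked set, or its O(N) vertices give a cheap
  competitor; so every optimal cost is O(N). By uncrossing, the optimal cuts are nested, and
  letting each vertex live from its own level down to the lowest level of its in-neighbours
  gives an interval decomposition whose bags are covered by two cut costs and one score class.
\<close>

lemma card_uncross_le:
  assumes "finite Y1" and "finite Y2"
    and "X1 \<inter> X2 \<subseteq> Y1 \<inter> Y2" and "X1 \<union> X2 \<subseteq> Y1 \<union> Y2"
  shows "card X1 + card X2 \<le> card Y1 + card Y2"
proof -
  have "finite (X1 \<union> X2)"
    by (rule finite_subset[OF assms(4)]) (use assms(1,2) in simp)
  then have "finite X1" "finite X2"
    by simp_all
  then have "card X1 + card X2 = card (X1 \<union> X2) + card (X1 \<inter> X2)"
    by (rule card_Un_Int)
  also have "\<dots> \<le> card (Y1 \<union> Y2) + card (Y1 \<inter> Y2)"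
    using assms by (intro add_mono card_mono) auto
  also have "\<dots> = card Y1 + card Y2"
    by (rule card_Un_Int[OF assms(1,2), symmetric])
  finally show ?thesis .
qed

lemma pathwidth_le:
  assumes "finite V" and "interval_decomp V A I"
    and "\<And>\<alpha>. card {v\<in>V. fst (I v) \<le> \<alpha> \<and> \<alpha> \<le> snd (I v)} \<le> b"
  shows "pathwidth V A \<le> b"
proof -
  have width_le: "decomp_width V J \<le> c"
    if "\<And>\<alpha>. card {v\<in>V. fst (J v) \<le> \<alpha> \<and> \<alpha> \<le> snd (J v)} \<le> c"
    for J :: "'a \<Rightarrow> int \<times> int" and c
  proof -
    have "range (\<lambda>\<alpha>. card {v\<in>V. fst (J v) \<le> \<alpha> \<and> \<alpha> \<le> snd (J v)}) \<subseteq> {..card V}"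
      using assms(1) by (auto intro: card_mono)
    then have "finite (range (\<lambda>\<alpha>. card {v\<in>V. fst (J v) \<le> \<alpha> \<and> \<alpha> \<le> snd (J v)}))"
      using finite_subset by blast
    then show ?thesis
      unfolding decomp_width_def using that by (subst Max_le_iff) auto
  qed
  have "decomp_width V J \<le> card V" for J
    using assms(1) by (intro width_le card_mono) auto
  then have "{decomp_width V J | J. interval_decomp V A J} \<subseteq> {..card V}"
    by auto
  then have "finite {decomp_width V J | J. interval_decomp V A J}"
    using finite_subset by blast
  then have "pathwidth V A \<le> decomp_width V I"
    unfolding pathwidth_def using assms(2) by (intro Min_le) auto
  also have "\<dots> \<le> b"
    by (rule width_le[OF assms(3)])
  finally show ?thesis .
qed

section \<open>Short paths and linked sets\<close>

lemma dipath_Cons_Cons: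
  "dipath A (x # y # zs) \<longleftrightarrow> (x, y) \<in> A \<and> x \<notin> set (y # zs) \<and> (zs = [] \<or> dipath A (y # zs))"
proof -
  have "(\<forall>i. Suc i < length (x # y # zs) \<longrightarrow> ((x # y # zs) ! i, (x # y # zs) ! Suc i) \<in> A) \<longleftrightarrow>
        (x, y) \<in> A \<and> (\<forall>i. Suc i < length (y # zs) \<longrightarrow> ((y # zs) ! i, (y # zs) ! Suc i) \<in> A)"
    by (auto simp: All_less_Suc2)
  then show ?thesis
    by (cases zs) (auto simp: dipath_def)
qed

lemma dipath_set_subset: "A \<subseteq> V \<times> V \<Longrightarrow> dipath A p \<Longrightarrow> set p \<subseteq> V"
proof (induction p rule: induct_list012)
  case (3 x y zs)
  then have "(x, y) \<in> A" "zs = [] \<or> dipath A (y # zs)"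
    by (simp_all add: dipath_Cons_Cons)
  with 3 show ?case
    by auto
qed (simp_all add: dipath_def)

lemma set_dipath: "dipath A p \<Longrightarrow> set p = {hd p, last p} \<union> interior p"
proof -
  assume "dipath A p"
  then obtain x q where "p = x # q" "q \<noteq> []"
    by (cases p) (auto simp: dipath_def Suc_le_length_iff)
  then show ?thesis
    by (cases q rule: rev_cases) (auto simp: interior_def)
qed

lemma interior_subset: "interior p \<subseteq> set p"
  by (cases p) (auto simp: interior_def dest: in_set_butlastD)

lemma card_interior_le: "card (interior p) \<le> length p - 2"
  unfolding interior_def using card_length[of "butlast (tl p)"] by simp

definition short_path :: "('a \<times> 'a) set \<Rightarrow> 'a set \<Rightarrow> 'a \<Rightarrow> 'a \<Rightarrow> 'a list \<Rightarrow> bool" where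
  "short_path A U x y p \<longleftrightarrow>
     dipath A p \<and> hd p = x \<and> last p = y \<and> length p \<le> 5 \<and> interior p \<inter> U = {}"

definition linked :: "('a \<times> 'a) set \<Rightarrow> 'a set \<Rightarrow> nat \<Rightarrow> bool" where
  "linked A J N \<longleftrightarrow> (\<forall>x\<in>J. \<forall>y\<in>J. x \<noteq> y \<longrightarrow>
     (\<forall>U. finite U \<and> card U \<le> N \<longrightarrow> (\<exists>p. short_path A U x y p)))"

lemma card_interior_short_path: "short_path A U x y p \<Longrightarrow> card (interior p) \<le> 3"
  using card_interior_le[of p] unfolding short_path_def by linarith

text \<open>Each routed path has at most three interior vertices, which are added to the set to avoid.\<close>

lemma linked_route:
  assumes "linked A J N" and "finite D"
    and "\<And>d. d \<in> D \<Longrightarrow> src d \<in> J \<and> dst d \<in> J \<and> src d \<noteq> dst d"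
    and "finite U" and "card U + 3 * card D \<le> N"
  shows "\<exists>ps. (\<forall>d\<in>D. short_path A U (src d) (dst d) (ps d)) \<and>
              (\<forall>d\<in>D. \<forall>d'\<in>D. d \<noteq> d' \<longrightarrow> interior (ps d) \<inter> interior (ps d') = {})"
  using assms(2-5)
proof (induction D rule: finite_induct)
  case empty
  show ?case by simp
next
  case (insert d D)
  then obtain ps where ps: "\<forall>d\<in>D. short_path A U (src d) (dst d) (ps d)"
    and ps_disj: "\<forall>d\<in>D. \<forall>d'\<in>D. d \<noteq> d' \<longrightarrow> interior (ps d) \<inter> interior (ps d') = {}"
    by auto
  define U' where "U' = U \<union> (\<Union>d'\<in>D. interior (ps d'))"
  have "card (\<Union>d'\<in>D. interior (ps d')) \<le> (\<Sum>d'\<in>D. card (interior (ps d')))"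
    by (rule card_UN_le[OF insert.hyps(1)])
  also have "\<dots> \<le> (\<Sum>d'\<in>D. 3)"
    by (intro sum_mono) (meson ps card_interior_short_path)
  finally have "card U' \<le> N"
    using insert.hyps insert.prems(3) card_Un_le[of U "\<Union>d'\<in>D. interior (ps d')"]
    unfolding U'_def by simp
  moreover have "finite U'"
    using insert.hyps(1) \<open>finite U\<close> by (simp add: U'_def interior_def)
  ultimately obtain p where p: "short_path A U' (src d) (dst d) p"
    using assms(1) insert.prems(1) unfolding linked_def by blast
  have "short_path A U (src d') (dst d') ((ps(d := p)) d')" if "d' \<in> insert d D" for d'
    using that p ps insert.hyps(2) by (auto simp: short_path_def U'_def)
  moreover have "interior ((ps(d := p)) d') \<inter> interior ((ps(d := p)) d'') = {}"
    if "d' \<in> insert d D" "d'' \<in> insert d D" "d' \<noteq> d''" for d' d''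
    using that p ps_disj insert.hyps(2) by (auto simp: short_path_def U'_def)
  ultimately show ?case
    by blast
qed

section \<open>Disjoint topological minor copies in linked sets\<close>

lemma top_minor_copy_if_linked:
  assumes H: "simple_digraph VH AH" and "linked A J N" and "A \<subseteq> V \<times> V" and "J \<subseteq> V"
    and "finite J" and "card VH \<le> card J" and "card VH + 3 * card AH \<le> N"
  shows "\<exists>f P. top_minor_copy VH AH V A f P"
proof -
  have "finite VH" and AH: "AH \<subseteq> VH \<times> VH" "\<And>x. (x, x) \<notin> AH"
    using H by (auto simp: simple_digraph_def)
  then have "finite AH"
    by (simp add: finite_subset)
  obtain f where f: "inj_on f VH" "f ` VH \<subseteq> J"
    using card_le_inj[OF \<open>finite VH\<close> \<open>finite J\<close> \<open>card VH \<le> card J\<close>] by blast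
  have ends: "f (fst e) \<in> J \<and> f (snd e) \<in> J \<and> f (fst e) \<noteq> f (snd e)" if "e \<in> AH" for e
  proof -
    obtain a b where "e = (a, b)" "a \<in> VH" "b \<in> VH" "a \<noteq> b"
      using \<open>e \<in> AH\<close> AH by (cases e) auto
    then show ?thesis
      using f inj_on_eq_iff[OF f(1)] by auto
  qed
  have "card (f ` VH) + 3 * card AH \<le> N"
    using assms(7) card_image[OF f(1)] by simp
  then obtain P where P: "\<forall>e\<in>AH. short_path A (f ` VH) (f (fst e)) (f (snd e)) (P e)"
    and P_disj: "\<forall>e\<in>AH. \<forall>e'\<in>AH. e \<noteq> e' \<longrightarrow> interior (P e) \<inter> interior (P e') = {}"
    using linked_route[where src = "\<lambda>e. f (fst e)" and dst = "\<lambda>e. f (snd e)", OF assms(2)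
        \<open>finite AH\<close> ends finite_imageI[OF \<open>finite VH\<close>]]
    by blast
  have "top_minor_copy VH AH V A f P"
    unfolding top_minor_copy_def
    using f assms(4) P P_disj dipath_set_subset[OF assms(3)] by (simp add: short_path_def)
  then show ?thesis
    by blast
qed

text \<open>k disjoint copies of H are one copy of the disjoint union of k copies of H.\<close>

definition kfold_arc :: "nat \<Rightarrow> 'b \<times> 'b \<Rightarrow> (nat \<times> 'b) \<times> (nat \<times> 'b)" where
  "kfold_arc i e = ((i, fst e), (i, snd e))"

definition kfold_arcs :: "nat \<Rightarrow> ('b \<times> 'b) set \<Rightarrow> ((nat \<times> 'b) \<times> (nat \<times> 'b)) set" where
  "kfold_arcs k AH = (\<lambda>(i, e). kfold_arc i e) ` ({..<k} \<times> AH)"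

lemma kfold_arc_in_kfold_arcs: "i < k \<Longrightarrow> e \<in> AH \<Longrightarrow> kfold_arc i e \<in> kfold_arcs k AH"
  unfolding kfold_arcs_def by force

lemma kfold_arc_eq_iff: "kfold_arc i e = kfold_arc j e' \<longleftrightarrow> i = j \<and> e = e'"
  by (auto simp: kfold_arc_def prod_eq_iff)

lemma simple_digraph_kfold:
  "simple_digraph VH AH \<Longrightarrow> simple_digraph ({..<k} \<times> VH) (kfold_arcs k AH)"
  by (auto simp: simple_digraph_def kfold_arcs_def kfold_arc_def)

lemma card_kfold_arcs: "card (kfold_arcs k AH) = k * card AH"
proof -
  have "inj_on (\<lambda>(i, e). kfold_arc i e) ({..<k} \<times> AH)"
    by (auto simp: inj_on_def kfold_arc_eq_iff)
  then show ?thesis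
    by (simp add: kfold_arcs_def card_image card_cartesian_product)
qed

lemma copy_verts_eq:
  assumes "top_minor_copy VH AH V A f P" and "AH \<subseteq> VH \<times> VH"
  shows "copy_verts VH AH f P = f ` VH \<union> (\<Union>e\<in>AH. interior (P e))"
proof -
  have "set (P e) \<subseteq> f ` VH \<union> interior (P e)" if "e \<in> AH" for e
    using assms that set_dipath[of A "P e"] unfolding top_minor_copy_def by auto
  moreover have "interior (P e) \<subseteq> set (P e)" for e
    by (rule interior_subset)
  ultimately show ?thesis
    unfolding copy_verts_def by blast
qed

lemma top_minor_copy_kfold_component:
  assumes copy: "top_minor_copy ({..<k} \<times> VH) (kfold_arcs k AH) V A f P" and "i < k"
  shows "top_minor_copy VH AH V A (\<lambda>h. f (i, h)) (\<lambda>e. P (kfold_arc i e))"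
  unfolding top_minor_copy_def
proof (intro conjI ballI impI)
  show "inj_on (\<lambda>h. f (i, h)) VH" "(\<lambda>h. f (i, h)) ` VH \<subseteq> V"
    using copy \<open>i < k\<close> by (auto simp: top_minor_copy_def inj_on_def)
next
  fix e assume "e \<in> AH"
  with copy kfold_arc_in_kfold_arcs[OF \<open>i < k\<close> this] \<open>i < k\<close>
  show "dipath A (P (kfold_arc i e))" "set (P (kfold_arc i e)) \<subseteq> V"
    "hd (P (kfold_arc i e)) = f (i, fst e)" "last (P (kfold_arc i e)) = f (i, snd e)"
    "interior (P (kfold_arc i e)) \<inter> (\<lambda>h. f (i, h)) ` VH = {}"
    by (auto simp: top_minor_copy_def kfold_arc_def)
next
  fix e e' assume "e \<in> AH" "e' \<in> AH" "e \<noteq> e'"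
  then show "interior (P (kfold_arc i e)) \<inter> interior (P (kfold_arc i e')) = {}"
    using copy kfold_arc_in_kfold_arcs[OF \<open>i < k\<close>] kfold_arc_eq_iff
    unfolding top_minor_copy_def by metis
qed

lemma kfold_components_disjoint:
  assumes copy: "top_minor_copy ({..<k} \<times> VH) (kfold_arcs k AH) V A f P"
    and "AH \<subseteq> VH \<times> VH" and "i < k" and "j < k" and "i \<noteq> j"
  shows "copy_verts VH AH (\<lambda>h. f (i, h)) (\<lambda>e. P (kfold_arc i e)) \<inter>
    copy_verts VH AH (\<lambda>h. f (j, h)) (\<lambda>e. P (kfold_arc j e)) = {}"
proof -
  define branch where "branch l = (\<lambda>h. f (l, h)) ` VH" for l
  define inner where "inner l = (\<Union>e\<in>AH. interior (P (kfold_arc l e)))" for l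
  define branches where "branches = f ` ({..<k} \<times> VH)"
  define inners where "inners = (\<Union>e\<in>kfold_arcs k AH. interior (P e))"
  have "branch l \<subseteq> branches" and "inner l \<subseteq> inners" if "l < k" for l
    using that kfold_arc_in_kfold_arcs[OF that, where AH = AH]
    unfolding branch_def branches_def inner_def inners_def by blast+
  moreover have "branch i \<inter> branch j = {}"
    using copy assms(3-5) by (auto simp: top_minor_copy_def inj_on_def branch_def)
  moreover have "inners \<inter> branches = {}"
    using copy unfolding top_minor_copy_def inners_def branches_def by blast
  moreover have "inner i \<inter> inner j = {}"
  proof -
    have "interior (P (kfold_arc i e)) \<inter> interior (P (kfold_arc j e')) = {}"
      if "e \<in> AH" "e' \<in> AH" for e e'
      using copy kfold_arc_in_kfold_arcs[OF \<open>i < k\<close> that(1)]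
        kfold_arc_in_kfold_arcs[OF \<open>j < k\<close> that(2)]
        kfold_arc_eq_iff \<open>i \<noteq> j\<close>
      unfolding top_minor_copy_def by metis
    then show ?thesis
      unfolding inner_def by blast
  qed
  ultimately have "(branch i \<union> inner i) \<inter> (branch j \<union> inner j) = {}"
    using \<open>i < k\<close> \<open>j < k\<close> by blast
  then show ?thesis
    using copy_verts_eq[OF top_minor_copy_kfold_component[OF copy \<open>i < k\<close>] assms(2)]
      copy_verts_eq[OF top_minor_copy_kfold_component[OF copy \<open>j < k\<close>] assms(2)]
    by (simp only: branch_def inner_def)
qed

lemma has_k_disjoint_copies_if_kfold_copy:
  assumes "top_minor_copy ({..<k} \<times> VH) (kfold_arcs k AH) V A f P" and "AH \<subseteq> VH \<times> VH"
  shows "has_k_disjoint_copies VH AH k V A"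
  unfolding has_k_disjoint_copies_def
  using top_minor_copy_kfold_component[OF assms(1)] kfold_components_disjoint[OF assms]
  by (intro exI[of _ "\<lambda>i h. f (i, h)"] exI[of _ "\<lambda>i e. P (kfold_arc i e)"]) simp

lemma has_k_disjoint_copies_if_linked:
  assumes "simple_digraph VH AH" and "linked A J N" and "A \<subseteq> V \<times> V" and "J \<subseteq> V"
    and "finite J" and "k * card VH \<le> card J" and "3 * k * (card VH + card AH) \<le> N"
  shows "has_k_disjoint_copies VH AH k V A"
proof -
  have "card ({..<k} \<times> VH) + 3 * card (kfold_arcs k AH) \<le> N"
    using assms(7) by (simp add: card_cartesian_product card_kfold_arcs algebra_simps)
  then obtain f P where "top_minor_copy ({..<k} \<times> VH) (kfold_arcs k AH) V A f P"
    using top_minor_copy_if_linked[OF simple_digraph_kfold[OF assms(1), where k = k] assms(2-5)]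
      assms(6)
    by (auto simp: card_cartesian_product)
  then show ?thesis
    by (rule has_k_disjoint_copies_if_kfold_copy) (use assms(1) in \<open>simp add: simple_digraph_def\<close>)
qed

lemma has_k_disjoint_copies_empty: "has_k_disjoint_copies {} {} k V A"
  unfolding has_k_disjoint_copies_def top_minor_copy_def copy_verts_def by simp

section \<open>Matchings\<close>

definition matching :: "('a \<times> 'a) set \<Rightarrow> bool" where
  "matching M \<longleftrightarrow> (\<forall>e\<in>M. \<forall>e'\<in>M. e \<noteq> e' \<longrightarrow> {fst e, snd e} \<inter> {fst e', snd e'} = {})"

lemma matching_subset: "matching M \<Longrightarrow> M' \<subseteq> M \<Longrightarrow> matching M'"
  unfolding matching_def by blast

lemma matching_inj_on_snd: "matching M \<Longrightarrow> inj_on snd M"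
  unfolding matching_def inj_on_def by blast

lemma maximal_matching_exists:
  assumes "finite E"
  shows "\<exists>M\<subseteq>E. matching M \<and> (\<forall>e\<in>E. {fst e, snd e} \<inter> (fst ` M \<union> snd ` M) \<noteq> {})"
  using assms
proof (induction E rule: finite_induct)
  case empty
  show ?case
    by (auto simp: matching_def)
next
  case (insert e E)
  then obtain M where M: "M \<subseteq> E" "matching M"
    and cover: "\<forall>e\<in>E. {fst e, snd e} \<inter> (fst ` M \<union> snd ` M) \<noteq> {}"
    by blast
  show ?case
  proof (cases "{fst e, snd e} \<inter> (fst ` M \<union> snd ` M) = {}")
    case True
    then have "matching (insert e M)"
      using M(2) unfolding matching_def by blast
    with True M(1) cover show ?thesis
      by (intro exI[of _ "insert e M"]) auto
  next
    case False
    with M cover show ?thesis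
      by blast
  qed
qed

definition matching_tail :: "('a \<times> 'a) set \<Rightarrow> 'a \<Rightarrow> 'a" where
  "matching_tail M h = fst (the_inv_into M snd h)"

lemma matching_tail_in:
  assumes "matching M" and "h \<in> snd ` M"
  shows "(matching_tail M h, h) \<in> M"
proof -
  have "the_inv_into M snd h \<in> M" and "snd (the_inv_into M snd h) = h"
    using the_inv_into_into[OF matching_inj_on_snd[OF assms(1)] assms(2) order_refl]
      f_the_inv_into_f[OF matching_inj_on_snd[OF assms(1)] assms(2)] by auto
  then show ?thesis
    unfolding matching_tail_def by (metis prod.collapse)
qed

lemma inj_on_matching_tail:
  assumes "matching M"
  shows "inj_on (matching_tail M) (snd ` M)"
proof (rule inj_onI)
  fix h h' assume "h \<in> snd ` M" "h' \<in> snd ` M" and eq: "matching_tail M h = matching_tail M h'"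
  have "(matching_tail M h, h) \<in> M"
    using matching_tail_in[OF assms \<open>h \<in> snd ` M\<close>] .
  moreover have "(matching_tail M h, h') \<in> M"
    using matching_tail_in[OF assms \<open>h' \<in> snd ` M\<close>] eq by simp
  ultimately show "h = h'"
    using assms unfolding matching_def by fastforce
qed

lemma exists_head_avoiding:
  assumes "matching M" and "finite M" and "finite U" and "card U \<le> N"
    and "2 * N + 2 \<le> card {h\<in>snd ` M. (h, y) \<in> A}"
  obtains h where "h \<in> snd ` M" and "(h, y) \<in> A" and "h \<notin> U" and "h \<noteq> x"
    and "matching_tail M h \<notin> U"
proof -
  define Bad where "Bad = U \<union> {x} \<union> {h\<in>snd ` M. matching_tail M h \<in> U}"
  have "card {h\<in>snd ` M. matching_tail M h \<in> U} \<le> card U"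
    using inj_on_matching_tail[OF assms(1)] \<open>finite U\<close>
    by (intro card_inj_on_le) (auto intro: inj_on_subset)
  moreover have "card Bad \<le> card (U \<union> {x}) + card {h\<in>snd ` M. matching_tail M h \<in> U}"
    unfolding Bad_def by (rule card_Un_le)
  moreover have "card (U \<union> {x}) \<le> card U + 1"
    using card_Un_le[of U "{x}"] by simp
  ultimately have "card Bad < card {h\<in>snd ` M. (h, y) \<in> A}"
    using assms(4,5) by linarith
  moreover have "finite Bad"
    using assms(2,3) by (simp add: Bad_def)
  ultimately have "\<not> {h\<in>snd ` M. (h, y) \<in> A} \<subseteq> Bad"
    using card_mono by (meson leD)
  then show ?thesis
    using that unfolding Bad_def by blast
qed

section \<open>Scores in tournaments\<close>

lemma tournament_converse: "tournament V A \<Longrightarrow> tournament V (A\<inverse>)"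
  unfolding tournament_def simple_digraph_def converse_iff by blast

locale tournament_digraph =
  fixes V :: "'a set" and A :: "('a \<times> 'a) set"
  assumes tournament: "tournament V A"
begin

lemma finite_V: "finite V"
  using tournament by (simp add: tournament_def simple_digraph_def)

lemma arcs_subset: "A \<subseteq> V \<times> V"
  using tournament by (simp add: tournament_def simple_digraph_def)

lemma arc_irrefl: "(x, x) \<notin> A"
  using tournament by (simp add: tournament_def simple_digraph_def)

lemma arc_asym: "(x, y) \<in> A \<Longrightarrow> (y, x) \<notin> A"
proof -
  assume xy: "(x, y) \<in> A"
  then have "x \<in> V" "y \<in> V" "x \<noteq> y"
    using arcs_subset arc_irrefl by auto
  then show ?thesis
    using xy tournament unfolding tournament_def by blast
qed

lemma arc_total: "x \<in> V \<Longrightarrow> y \<in> V \<Longrightarrow> x \<noteq> y \<Longrightarrow> (x, y) \<notin> A \<Longrightarrow> (y, x) \<in> A"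
  using tournament unfolding tournament_def by blast

lemma finite_A: "finite A"
  using finite_subset[OF arcs_subset] finite_V by simp

definition outs :: "'a \<Rightarrow> 'a set" where
  "outs x = {y\<in>V. (x, y) \<in> A}"

definition ins :: "'a \<Rightarrow> 'a set" where
  "ins x = {y\<in>V. (y, x) \<in> A}"

definition score :: "'a \<Rightarrow> nat" where
  "score x = card (outs x)"

lemma card_ins_add_score: "x \<in> V \<Longrightarrow> card (ins x) + score x + 1 = card V"
proof -
  assume "x \<in> V"
  then have "V = insert x (ins x \<union> outs x)" and "x \<notin> ins x \<union> outs x"
    and "ins x \<inter> outs x = {}"
    using arc_total arc_irrefl arc_asym by (auto simp: ins_def outs_def)
  then have "card V = card (ins x) + card (outs x) + 1"
    using finite_V
    by (metis card_Un_disjoint card_insert_disjoint finite_Un finite_insert Suc_eq_plus1)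
  then show ?thesis
    by (simp add: score_def)
qed

lemma score_less_card: "x \<in> V \<Longrightarrow> score x < card V"
  using card_ins_add_score by fastforce

lemma card_out_add_card_in_within:
  assumes "S \<subseteq> V" and "z \<in> S"
  shows "card {w\<in>S. (z, w) \<in> A} + card {w\<in>S. (w, z) \<in> A} = card S - 1"
proof -
  have "S - {z} = {w\<in>S. (z, w) \<in> A} \<union> {w\<in>S. (w, z) \<in> A}"
    using assms arc_total arc_irrefl by blast
  moreover have "{w\<in>S. (z, w) \<in> A} \<inter> {w\<in>S. (w, z) \<in> A} = {}"
    using arc_asym by blast
  moreover have "finite S"
    using assms(1) finite_V by (rule finite_subset)
  ultimately show ?thesis
    using assms(2) by (metis (no_types, lifting) card_Diff_singleton card_Un_disjoint finite_Diff
        finite_Un)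
qed

lemma sum_card_out_within:
  assumes "S \<subseteq> V"
  shows "2 * (\<Sum>z\<in>S. card {w\<in>S. (z, w) \<in> A}) = card S * (card S - 1)"
proof -
  have "finite S"
    using assms(1) finite_V by (rule finite_subset)
  have card_filter: "card {w\<in>S. P w} = (\<Sum>w\<in>S. of_bool (P w))" for P
    using \<open>finite S\<close> by (simp add: Int_def)
  have "(\<Sum>z\<in>S. card {w\<in>S. (w, z) \<in> A}) = (\<Sum>z\<in>S. card {w\<in>S. (z, w) \<in> A})"
    unfolding card_filter by (rule sum.swap)
  then have "2 * (\<Sum>z\<in>S. card {w\<in>S. (z, w) \<in> A}) =
      (\<Sum>z\<in>S. card {w\<in>S. (z, w) \<in> A} + card {w\<in>S. (w, z) \<in> A})"
    by (simp add: sum.distrib)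
  also have "\<dots> = (\<Sum>z\<in>S. card S - 1)"
    using card_out_add_card_in_within[OF assms] by simp
  finally show ?thesis
    by simp
qed

lemma exists_large_outdeg_within:
  assumes "S \<subseteq> V" and "S \<noteq> {}"
  shows "\<exists>z\<in>S. card S \<le> 2 * card {w\<in>S. (z, w) \<in> A} + 1"
proof -
  define d where "d z = card {w\<in>S. (z, w) \<in> A}" for z
  have "finite S"
    using assms(1) finite_V by (rule finite_subset)
  have "Max (d ` S) \<in> d ` S"
    using \<open>finite S\<close> assms(2) by simp
  then obtain z where "z \<in> S" and "d z = Max (d ` S)"
    by auto
  then have z_max: "d w \<le> d z" if "w \<in> S" for w
    using \<open>finite S\<close> that by simp
  have "(\<Sum>w\<in>S. d w) \<le> card S * d z"
    using sum_bounded_above[of S d "d z", OF z_max] by simp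
  then have "card S * (card S - 1) \<le> card S * (2 * d z)"
    using sum_card_out_within[OF assms(1)] unfolding d_def by linarith
  moreover have "0 < card S"
    using \<open>z \<in> S\<close> \<open>finite S\<close> card_gt_0_iff by blast
  ultimately have "card S - 1 \<le> 2 * d z"
    by simp
  then show ?thesis
    using \<open>z \<in> S\<close> unfolding d_def by (intro bexI[of _ z]) auto
qed

lemma exists_large_indeg_within:
  assumes "S \<subseteq> V" and "S \<noteq> {}"
  shows "\<exists>z\<in>S. card S \<le> 2 * card {w\<in>S. (w, z) \<in> A} + 1"
proof -
  interpret converse: tournament_digraph V "A\<inverse>"
    by (rule tournament_digraph.intro[OF tournament_converse[OF tournament]])
  show ?thesis
    using converse.exists_large_outdeg_within[OF assms] by simp
qed

lemma exists_score_ge_if_dominates: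
  assumes "S \<subseteq> V" and "S \<noteq> {}" and "B \<subseteq> V" and "S \<inter> B = {}"
    and "\<And>z b. z \<in> S \<Longrightarrow> b \<in> B \<Longrightarrow> (z, b) \<in> A"
  shows "\<exists>z\<in>S. card S + 2 * card B \<le> 2 * score z + 1"
proof -
  obtain z where "z \<in> S" and z: "card S \<le> 2 * card {w\<in>S. (z, w) \<in> A} + 1"
    using exists_large_outdeg_within[OF assms(1,2)] by blast
  have "finite (outs z)"
    using finite_V by (simp add: outs_def)
  moreover have "B \<union> {w\<in>S. (z, w) \<in> A} \<subseteq> outs z"
    using assms(1,3,5) \<open>z \<in> S\<close> by (auto simp: outs_def)
  moreover have "B \<inter> {w\<in>S. (z, w) \<in> A} = {}"
    using assms(4) by blast
  ultimately have "card B + card {w\<in>S. (z, w) \<in> A} \<le> score z"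
    unfolding score_def by (metis card_Un_disjoint card_mono finite_Un finite_subset)
  with z \<open>z \<in> S\<close> show ?thesis
    by (intro bexI[of _ z]) linarith+
qed

lemma exists_card_ins_ge_if_dominated:
  assumes "S \<subseteq> V" and "S \<noteq> {}" and "B \<subseteq> V" and "S \<inter> B = {}"
    and "\<And>z b. z \<in> S \<Longrightarrow> b \<in> B \<Longrightarrow> (b, z) \<in> A"
  shows "\<exists>z\<in>S. card S + 2 * card B \<le> 2 * card (ins z) + 1"
proof -
  interpret converse: tournament_digraph V "A\<inverse>"
    by (rule tournament_digraph.intro[OF tournament_converse[OF tournament]])
  have "converse.score z = card (ins z)" for z
    by (simp add: converse.score_def converse.outs_def ins_def)
  then show ?thesis
    using converse.exists_score_ge_if_dominates[OF assms(1-4)] assms(5) by simp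
qed

lemma score_le_card_midpoints:
  assumes "x \<in> V" and "u \<in> V" and "x \<noteq> u"
  shows "score x \<le> card {w\<in>V. (x, w) \<in> A \<and> (w, u) \<in> A} + score u + 1"
proof -
  have "outs x \<subseteq> {w\<in>V. (x, w) \<in> A \<and> (w, u) \<in> A} \<union> outs u \<union> {u}"
    unfolding outs_def using arc_total[of _ u] assms(2) by blast
  then have "score x \<le> card ({w\<in>V. (x, w) \<in> A \<and> (w, u) \<in> A} \<union> outs u \<union> {u})"
    unfolding score_def using finite_V by (intro card_mono) (auto simp: outs_def)
  also have "\<dots> \<le> card {w\<in>V. (x, w) \<in> A \<and> (w, u) \<in> A} + score u + 1"
    using card_Un_le[of "{w\<in>V. (x, w) \<in> A \<and> (w, u) \<in> A} \<union> outs u" "{u}"]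
      card_Un_le[of "{w\<in>V. (x, w) \<in> A \<and> (w, u) \<in> A}" "outs u"]
    unfolding score_def by simp
  finally show ?thesis .
qed

section \<open>Linked sets in tournaments\<close>

lemma short_path_or_separated:
  assumes "x \<in> V" and "y \<in> V" and "x \<noteq> y"
  obtains p where "short_path A U x y p"
  | "(y, x) \<in> A" and "(outs x - U - {y}) \<inter> (ins y - U - {x}) = {}"
    and "\<And>u v. u \<in> outs x - U - {y} \<Longrightarrow> v \<in> ins y - U - {x} \<Longrightarrow> (v, u) \<in> A"
proof (cases "(x, y) \<in> A")
  case True
  then have "short_path A U x y [x, y]"
    using assms(3) by (simp add: short_path_def dipath_Cons_Cons interior_def)
  then show ?thesis
    using that(1) by blast
next
  case False
  then have "(y, x) \<in> A"
    using arc_total[OF assms] by blast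
  show ?thesis
  proof (cases "\<exists>w. w \<in> (outs x - U - {y}) \<inter> (ins y - U - {x})")
    case True
    then obtain w where "(x, w) \<in> A" "(w, y) \<in> A" "w \<notin> U" "w \<noteq> x" "w \<noteq> y"
      by (auto simp: outs_def ins_def)
    then have "short_path A U x y [x, w, y]"
      using assms(3) by (simp add: short_path_def dipath_Cons_Cons interior_def)
    then show ?thesis
      using that(1) by blast
  next
    case disjoint: False
    show ?thesis
    proof (cases "\<exists>u\<in>outs x - U - {y}. \<exists>v\<in>ins y - U - {x}. (u, v) \<in> A")
      case True
      then obtain u v where "(x, u) \<in> A" "(u, v) \<in> A" "(v, y) \<in> A" "u \<notin> U" "v \<notin> U"
        "u \<noteq> y" "v \<noteq> x"
        by (auto simp: outs_def ins_def)
      moreover have "x \<noteq> u" "u \<noteq> v" "v \<noteq> y"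
        using calculation arc_irrefl by auto
      ultimately have "short_path A U x y [x, u, v, y]"
        using assms(3) by (simp add: short_path_def dipath_Cons_Cons interior_def)
      then show ?thesis
        using that(1) by blast
    next
      case False
      have "(v, u) \<in> A" if "u \<in> outs x - U - {y}" "v \<in> ins y - U - {x}" for u v
      proof (rule arc_total)
        show "u \<in> V" "v \<in> V"
          using that by (auto simp: outs_def ins_def)
        show "u \<noteq> v" "(u, v) \<notin> A"
          using that disjoint False by auto
      qed
      then show ?thesis
        using that(2) \<open>(y, x) \<in> A\<close> disjoint by blast
    qed
  qed
qed

lemma card_outside_separated_le:
  fixes x y :: 'a and U :: "'a set"
  defines "Ox \<equiv> outs x - U - {y}" and "Iy \<equiv> ins y - U - {x}"
  assumes "x \<in> V" and "y \<in> V" and "x \<noteq> y" and "finite U" and "(y, x) \<in> A"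
    and "Ox \<inter> Iy = {}"
  shows "score x \<le> card Ox + card U" and "card (ins y) \<le> card Iy + card U"
    and "card (V - (Ox \<union> Iy \<union> U \<union> {x, y})) + score x + 1 \<le> score y + 2 * card U"
proof -
  define R where "R = V - (Ox \<union> Iy \<union> U \<union> {x, y})"
  have fin: "finite Ox" "finite Iy" "finite R"
    using finite_V by (auto simp: Ox_def Iy_def outs_def ins_def R_def)
  have "outs x \<subseteq> Ox \<union> U" "ins y \<subseteq> Iy \<union> U"
    using \<open>(y, x) \<in> A\<close> arc_asym by (auto simp: Ox_def Iy_def outs_def ins_def)
  then have "score x \<le> card (Ox \<union> U)" "card (ins y) \<le> card (Iy \<union> U)"
    unfolding score_def using fin \<open>finite U\<close> by (simp_all add: card_mono)
  then show card_Ox: "score x \<le> card Ox + card U" and card_Iy: "card (ins y) \<le> card Iy + card U"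
    using card_Un_le[of Ox U] card_Un_le[of Iy U] by linarith+
  have "x \<notin> Ox" "y \<notin> Ox" "x \<notin> Iy" "y \<notin> Iy"
    using arc_irrefl by (auto simp: Ox_def Iy_def outs_def ins_def)
  then have "card (Ox \<union> Iy \<union> {x, y}) = card (Ox \<union> Iy) + card {x, y}"
    using fin by (intro card_Un_disjoint) auto
  moreover have "card (Ox \<union> Iy \<union> {x, y} \<union> R) = card (Ox \<union> Iy \<union> {x, y}) + card R"
    using fin by (intro card_Un_disjoint) (auto simp: R_def)
  moreover have "card (Ox \<union> Iy) = card Ox + card Iy"
    using fin \<open>Ox \<inter> Iy = {}\<close> by (intro card_Un_disjoint) auto
  moreover have "Ox \<union> Iy \<union> {x, y} \<union> R \<subseteq> V"
    using \<open>x \<in> V\<close> \<open>y \<in> V\<close> by (auto simp: Ox_def Iy_def outs_def ins_def R_def)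
  ultimately have "card Ox + card Iy + 2 + card R \<le> card V"
    using card_mono[OF finite_V] \<open>x \<noteq> y\<close> by (metis card_2_iff)
  then show "card R + score x + 1 \<le> score y + 2 * card U"
    using card_Ox card_Iy card_ins_add_score[OF \<open>y \<in> V\<close>] by linarith
qed

text \<open>
  The vertices of X in Iy beat all of Ox and those in Ox lose to all of Iy; with scores in a
  window this bounds both parts, and the rest of X lies in {x, y}, U or outside Ox, Iy, U.
\<close>

lemma card_score_window_le_if_separated:
  fixes x y :: 'a and U :: "'a set"
  defines "Ox \<equiv> outs x - U - {y}" and "Iy \<equiv> ins y - U - {x}"
  assumes X: "X \<subseteq> V" "\<And>v. v \<in> X \<Longrightarrow> a \<le> score v \<and> score v \<le> a + l"
    and "x \<in> X" and "y \<in> X" and "x \<noteq> y" and "finite U" and "(y, x) \<in> A"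
    and disjoint: "Ox \<inter> Iy = {}" and backward: "\<And>u v. u \<in> Ox \<Longrightarrow> v \<in> Iy \<Longrightarrow> (v, u) \<in> A"
  shows "card X \<le> 5 * l + 7 * card U + 3"
proof -
  define R where "R = V - (Ox \<union> Iy \<union> U \<union> {x, y})"
  have "x \<in> V" "y \<in> V" "Ox \<subseteq> V" "Iy \<subseteq> V"
    using X \<open>x \<in> X\<close> \<open>y \<in> X\<close> by (auto simp: Ox_def Iy_def outs_def ins_def)
  note outside = card_outside_separated_le[OF \<open>x \<in> V\<close> \<open>y \<in> V\<close> \<open>x \<noteq> y\<close> \<open>finite U\<close>
      \<open>(y, x) \<in> A\<close> disjoint[unfolded Ox_def Iy_def], folded Ox_def Iy_def R_def]
  have card_XIy: "card (X \<inter> Iy) \<le> 2 * l + 2 * card U + 1"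
  proof (cases "X \<inter> Iy = {}")
    case False
    then obtain z where "z \<in> X" and "card (X \<inter> Iy) + 2 * card Ox \<le> 2 * score z + 1"
      using exists_score_ge_if_dominates[of "X \<inter> Iy" Ox] X(1) \<open>Ox \<subseteq> V\<close> disjoint backward by blast
    then show ?thesis
      using outside(1) X(2)[OF \<open>z \<in> X\<close>] X(2)[OF \<open>x \<in> X\<close>] by linarith
  qed simp
  have card_XOx: "card (X \<inter> Ox) \<le> 2 * l + 2 * card U + 1"
  proof (cases "X \<inter> Ox = {}")
    case False
    then obtain z where "z \<in> X" and "card (X \<inter> Ox) + 2 * card Iy \<le> 2 * card (ins z) + 1"
      using exists_card_ins_ge_if_dominated[of "X \<inter> Ox" Iy] X(1) \<open>Iy \<subseteq> V\<close> disjoint backward by blast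
    moreover have "z \<in> V"
      using X(1) \<open>z \<in> X\<close> by blast
    ultimately show ?thesis
      using outside(2) card_ins_add_score[OF \<open>z \<in> V\<close>] card_ins_add_score[OF \<open>y \<in> V\<close>]
        X(2)[OF \<open>z \<in> X\<close>] X(2)[OF \<open>y \<in> X\<close>]
      by linarith
  qed simp
  have "X \<subseteq> {x, y} \<union> U \<union> (X \<inter> Iy) \<union> (X \<inter> Ox) \<union> R"
    using X(1) by (auto simp: R_def)
  then have "card X \<le> card ({x, y} \<union> U \<union> (X \<inter> Iy) \<union> (X \<inter> Ox) \<union> R)"
    using finite_subset[OF X(1) finite_V] finite_V \<open>finite U\<close>
    by (intro card_mono) (auto simp: R_def)
  also have "\<dots> \<le> card {x, y} + card U + card (X \<inter> Iy) + card (X \<inter> Ox) + card R"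
    by (meson card_Un_le add_le_mono le_trans order_refl)
  finally show ?thesis
    using outside(3) card_XIy card_XOx X(2)[OF \<open>x \<in> X\<close>] X(2)[OF \<open>y \<in> X\<close>] \<open>x \<noteq> y\<close>
    by simp
qed

lemma linked_if_score_window:
  assumes "X \<subseteq> V" and "\<And>v. v \<in> X \<Longrightarrow> a \<le> score v \<and> score v \<le> a + l"
    and "5 * l + 7 * N + 4 \<le> card X"
  shows "linked A X N"
  unfolding linked_def
proof (intro ballI impI allI)
  fix x y and U :: "'a set"
  assume "x \<in> X" "y \<in> X" "x \<noteq> y" and U: "finite U \<and> card U \<le> N"
  then have "x \<in> V" "y \<in> V"
    using assms(1) by auto
  show "\<exists>p. short_path A U x y p"
  proof (rule short_path_or_separated[OF \<open>x \<in> V\<close> \<open>y \<in> V\<close> \<open>x \<noteq> y\<close>, of U])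
    assume sep: "(y, x) \<in> A" "(outs x - U - {y}) \<inter> (ins y - U - {x}) = {}"
      "\<And>u v. u \<in> outs x - U - {y} \<Longrightarrow> v \<in> ins y - U - {x} \<Longrightarrow> (v, u) \<in> A"
    have "card X \<le> 5 * l + 7 * card U + 3"
      by (rule card_score_window_le_if_separated[OF assms(1,2) \<open>x \<in> X\<close> \<open>y \<in> X\<close>
            \<open>x \<noteq> y\<close> conjunct1[OF U] sep])
    then show ?thesis
      using assms(3) U by linarith
  qed blast
qed

lemma exists_midpoint_avoiding:
  assumes "x \<in> V" and "u \<in> V" and "x \<noteq> u" and "finite Z"
    and "score u + card Z + 2 \<le> score x"
  obtains w where "(x, w) \<in> A" and "(w, u) \<in> A" and "w \<notin> Z"
proof -
  define P where "P = {w\<in>V. (x, w) \<in> A \<and> (w, u) \<in> A}"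
  have "card Z < card P"
    using score_le_card_midpoints[OF assms(1-3)] assms(5) unfolding P_def by linarith
  then have "\<not> P \<subseteq> Z"
    using card_mono[OF assms(4)] by (meson leD)
  then show ?thesis
    using that unfolding P_def by blast
qed

lemma card_low_indeg_within_le:
  assumes "S \<subseteq> V" and "1 \<le> D"
  shows "card {x\<in>S. card {x'\<in>S. (x', x) \<in> A} < D} + 1 \<le> 2 * D"
proof (cases "{x\<in>S. card {x'\<in>S. (x', x) \<in> A} < D} = {}")
  case True
  then show ?thesis
    unfolding True using assms(2) by simp
next
  case False
  define L where "L = {x\<in>S. card {x'\<in>S. (x', x) \<in> A} < D}"
  have "L \<subseteq> V"
    using assms(1) by (auto simp: L_def)
  then obtain z where "z \<in> L" and z: "card L \<le> 2 * card {w\<in>L. (w, z) \<in> A} + 1"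
    using exists_large_indeg_within False unfolding L_def by blast
  have "finite S"
    using assms(1) finite_V by (rule finite_subset)
  then have "card {w\<in>L. (w, z) \<in> A} \<le> card {x'\<in>S. (x', z) \<in> A}"
    by (intro card_mono) (auto simp: L_def)
  moreover have "card {x'\<in>S. (x', z) \<in> A} < D"
    using \<open>z \<in> L\<close> by (simp add: L_def)
  ultimately show ?thesis
    using z unfolding L_def by linarith
qed

text \<open>
  The path runs x, w, u, x', y, where x' is a head of M entering y, u its tail, and w is found
  because the score gap between x and u leaves many common neighbours.
\<close>

lemma short_path_through_matching:
  assumes "M \<subseteq> A" and "matching M"
    and gap: "\<And>u x. u \<in> fst ` M \<Longrightarrow> x \<in> snd ` M \<Longrightarrow> score u + N + 4 \<le> score x"
    and "x \<in> snd ` M" and "y \<in> snd ` M" and "x \<noteq> y"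
    and "2 * N + 2 \<le> card {h\<in>snd ` M. (h, y) \<in> A}"
    and "finite U" and "card U \<le> N"
  shows "\<exists>p. short_path A U x y p"
proof (cases "(x, y) \<in> A")
  case True
  then show ?thesis
    using \<open>x \<noteq> y\<close>
    by (intro exI[of _ "[x, y]"]) (simp add: short_path_def dipath_Cons_Cons interior_def)
next
  case False
  obtain xs where "xs \<in> snd ` M" "(xs, y) \<in> A" "xs \<notin> U" "xs \<noteq> x" "matching_tail M xs \<notin> U"
    using exists_head_avoiding[OF assms(2) finite_subset[OF assms(1) finite_A] assms(8,9,7)]
    by blast
  define us where "us = matching_tail M xs"
  have "(us, xs) \<in> M"
    unfolding us_def by (rule matching_tail_in[OF assms(2) \<open>xs \<in> snd ` M\<close>])
  then have "(us, xs) \<in> A" "us \<in> fst ` M"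
    using assms(1) by (auto intro: rev_image_eqI)
  then have "us \<in> V" "x \<in> V"
    using arcs_subset assms(1,4) by auto
  have "score us + N + 4 \<le> score x" "score us + N + 4 \<le> score y"
    using gap \<open>us \<in> fst ` M\<close> assms(4,5) by auto
  moreover have "card (U \<union> {xs, y}) \<le> N + 2"
  proof -
    have "card {xs, y} \<le> 2"
      by (cases "xs = y") simp_all
    then show ?thesis
      using assms(9) card_Un_le[of U "{xs, y}"] by linarith
  qed
  ultimately have "score us + card (U \<union> {xs, y}) + 2 \<le> score x" "x \<noteq> us"
    by (linarith, auto)
  moreover have "finite (U \<union> {xs, y})"
    using \<open>finite U\<close> by simp
  ultimately obtain w where "(x, w) \<in> A" "(w, us) \<in> A" "w \<notin> U \<union> {xs, y}"
    using exists_midpoint_avoiding[OF \<open>x \<in> V\<close> \<open>us \<in> V\<close>] by blast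
  then have "short_path A U x y [x, w, us, xs, y]"
    using \<open>(us, xs) \<in> A\<close> \<open>(xs, y) \<in> A\<close> \<open>xs \<notin> U\<close> \<open>xs \<noteq> x\<close> \<open>matching_tail M xs \<notin> U\<close>
      \<open>x \<noteq> y\<close> \<open>score us + N + 4 \<le> score x\<close> \<open>score us + N + 4 \<le> score y\<close> arc_irrefl
    by (auto simp: short_path_def dipath_Cons_Cons interior_def us_def)
  then show ?thesis
    by blast
qed

lemma linked_heads_if_matching_gap:
  assumes "M \<subseteq> A" and "matching M"
    and "\<And>u x. u \<in> fst ` M \<Longrightarrow> x \<in> snd ` M \<Longrightarrow> score u + N + 4 \<le> score x"
  obtains J where "J \<subseteq> V" and "linked A J N" and "card M + 1 \<le> card J + 4 * N + 4"
proof -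
  define J where "J = {x\<in>snd ` M. 2 * N + 2 \<le> card {x'\<in>snd ` M. (x', x) \<in> A}}"
  have "snd ` M \<subseteq> V"
    using assms(1) arcs_subset by auto
  have "J \<subseteq> V"
    using \<open>snd ` M \<subseteq> V\<close> by (auto simp: J_def)
  moreover have "linked A J N"
    unfolding linked_def
  proof (intro ballI impI allI)
    fix x y and U :: "'a set"
    assume "x \<in> J" "y \<in> J" "x \<noteq> y" "finite U \<and> card U \<le> N"
    then show "\<exists>p. short_path A U x y p"
      using short_path_through_matching[OF assms, of x y U] by (simp add: J_def)
  qed
  moreover have "card M + 1 \<le> card J + 4 * N + 4"
  proof -
    define L where "L = {x\<in>snd ` M. card {x'\<in>snd ` M. (x', x) \<in> A} < 2 * N + 2}"
    have "snd ` M = J \<union> L"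
      by (auto simp: J_def L_def)
    then have "card (snd ` M) \<le> card J + card L"
      using card_Un_le[of J L] by simp
    moreover have "card (snd ` M) = card M"
      using card_image[OF matching_inj_on_snd[OF assms(2)]] .
    ultimately show ?thesis
      using card_low_indeg_within_le[OF \<open>snd ` M \<subseteq> V\<close>, of "2 * N + 2"] unfolding L_def
      by simp
  qed
  ultimately show ?thesis
    by (rule that)
qed

section \<open>Nested optimal cuts\<close>

definition high :: "nat \<Rightarrow> 'a set" where
  "high \<sigma> = {v\<in>V. \<sigma> \<le> score v}"

definition low :: "nat \<Rightarrow> 'a set" where
  "low \<sigma> = {v\<in>V. score v < \<sigma>}"

definition in_boundary :: "'a set \<Rightarrow> 'a set" where
  "in_boundary P = {v\<in>P. \<exists>u\<in>V - P. (u, v) \<in> A}"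

definition cut_cost :: "nat \<Rightarrow> 'a set \<Rightarrow> nat" where
  "cut_cost \<sigma> P = card (in_boundary P) + card (P \<inter> low \<sigma>) + card (high \<sigma> - P)"

text \<open>
  Ties are broken towards smaller sets; together with the uncrossing inequality below this makes
  the optimal cuts nested.
\<close>

definition optimal_cut :: "nat \<Rightarrow> 'a set \<Rightarrow> bool" where
  "optimal_cut \<sigma> P \<longleftrightarrow> P \<subseteq> V \<and> (\<forall>Q\<subseteq>V. cut_cost \<sigma> P \<le> cut_cost \<sigma> Q) \<and>
     (\<forall>Q\<subseteq>V. cut_cost \<sigma> Q = cut_cost \<sigma> P \<longrightarrow> card P \<le> card Q)"

definition cut :: "nat \<Rightarrow> 'a set" where
  "cut \<sigma> = (SOME P. optimal_cut \<sigma> P)"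

lemma optimal_cut_exists: "\<exists>P. optimal_cut \<sigma> P"
proof -
  have "\<exists>P0. P0 \<subseteq> V \<and> (\<forall>Q. Q \<subseteq> V \<longrightarrow> cut_cost \<sigma> P0 \<le> cut_cost \<sigma> Q)"
    using ex_has_least_nat[of "\<lambda>P. P \<subseteq> V" V "cut_cost \<sigma>"] by simp
  then obtain P0 where P0: "P0 \<subseteq> V" "\<forall>Q. Q \<subseteq> V \<longrightarrow> cut_cost \<sigma> P0 \<le> cut_cost \<sigma> Q"
    by blast
  have "\<exists>P. (P \<subseteq> V \<and> cut_cost \<sigma> P = cut_cost \<sigma> P0) \<and>
      (\<forall>Q. Q \<subseteq> V \<and> cut_cost \<sigma> Q = cut_cost \<sigma> P0 \<longrightarrow> card P \<le> card Q)"
    using ex_has_least_nat[of "\<lambda>P. P \<subseteq> V \<and> cut_cost \<sigma> P = cut_cost \<sigma> P0" P0 card] P0(1) by simp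
  then obtain P where "P \<subseteq> V" "cut_cost \<sigma> P = cut_cost \<sigma> P0"
    "\<forall>Q. Q \<subseteq> V \<and> cut_cost \<sigma> Q = cut_cost \<sigma> P0 \<longrightarrow> card P \<le> card Q"
    by blast
  then have "optimal_cut \<sigma> P"
    using P0(2) unfolding optimal_cut_def by simp
  then show ?thesis ..
qed

lemma optimal_cut_cut: "optimal_cut \<sigma> (cut \<sigma>)"
  unfolding cut_def by (rule someI_ex[OF optimal_cut_exists])

lemma cut_subset: "cut \<sigma> \<subseteq> V"
  and cut_cost_le: "Q \<subseteq> V \<Longrightarrow> cut_cost \<sigma> (cut \<sigma>) \<le> cut_cost \<sigma> Q"
  and card_cut_le: "Q \<subseteq> V \<Longrightarrow> cut_cost \<sigma> Q = cut_cost \<sigma> (cut \<sigma>) \<Longrightarrow> card (cut \<sigma>) \<le> card Q"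
  using optimal_cut_cut[of \<sigma>] unfolding optimal_cut_def by blast+

lemma cut_cost_uncross:
  assumes "P \<subseteq> V" and "Q \<subseteq> V" and "\<sigma>' \<le> \<sigma>"
  shows "cut_cost \<sigma> (P \<inter> Q) + cut_cost \<sigma>' (P \<union> Q) \<le> cut_cost \<sigma> P + cut_cost \<sigma>' Q"
proof -
  have "finite P" "finite Q"
    using finite_subset[OF assms(1) finite_V] finite_subset[OF assms(2) finite_V] .
  moreover have "low \<sigma>' \<subseteq> low \<sigma>" "high \<sigma> \<subseteq> high \<sigma>'" "finite (high \<sigma>)" "finite (high \<sigma>')"
    using assms(3) finite_V by (auto simp: low_def high_def)
  ultimately have "card (in_boundary (P \<inter> Q)) + card (in_boundary (P \<union> Q)) \<le>
      card (in_boundary P) + card (in_boundary Q)"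
    and "card (P \<inter> Q \<inter> low \<sigma>) + card ((P \<union> Q) \<inter> low \<sigma>') \<le> card (P \<inter> low \<sigma>) + card (Q \<inter> low \<sigma>')"
    and "card (high \<sigma> - P \<inter> Q) + card (high \<sigma>' - (P \<union> Q)) \<le> card (high \<sigma> - P) + card (high \<sigma>' - Q)"
    by (intro card_uncross_le; auto simp: in_boundary_def)+
  then show ?thesis
    unfolding cut_cost_def by linarith
qed

lemma cut_antimono:
  assumes "\<sigma>' \<le> \<sigma>"
  shows "cut \<sigma> \<subseteq> cut \<sigma>'"
proof -
  have "cut_cost \<sigma> (cut \<sigma>) \<le> cut_cost \<sigma> (cut \<sigma> \<inter> cut \<sigma>')"
    and "cut_cost \<sigma>' (cut \<sigma>') \<le> cut_cost \<sigma>' (cut \<sigma> \<union> cut \<sigma>')"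
    using cut_subset by (intro cut_cost_le; blast)+
  then have "cut_cost \<sigma> (cut \<sigma> \<inter> cut \<sigma>') = cut_cost \<sigma> (cut \<sigma>)"
    using cut_cost_uncross[OF cut_subset[of \<sigma>] cut_subset[of \<sigma>'] assms] by linarith
  then have "card (cut \<sigma>) \<le> card (cut \<sigma> \<inter> cut \<sigma>')"
    using cut_subset by (intro card_cut_le) auto
  moreover have "finite (cut \<sigma>)"
    using cut_subset finite_V by (rule finite_subset)
  ultimately show ?thesis
    by (metis Int_lower1 card_seteq le_iff_inf)
qed

lemma cut_0: "cut 0 = V"
proof -
  have "cut_cost 0 V = 0"
    by (simp add: cut_cost_def in_boundary_def low_def high_def)
  then have "high 0 - cut 0 = {}"
    using cut_cost_le[of V 0] finite_V by (simp add: cut_cost_def high_def)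
  then show ?thesis
    using cut_subset[of 0] by (auto simp: high_def)
qed

lemma cut_card_V: "cut (card V) = {}"
proof -
  have "high (card V) = {}"
    using score_less_card by (fastforce simp: high_def)
  then have "cut_cost (card V) {} = 0"
    by (simp add: cut_cost_def in_boundary_def)
  then have "cut_cost (card V) (cut (card V)) = cut_cost (card V) {}"
    using cut_cost_le[of "{}" "card V"] by simp
  then have "card (cut (card V)) = 0"
    using card_cut_le[of "{}" "card V"] by simp
  then show ?thesis
    using cut_subset finite_V by (meson card_0_eq finite_subset)
qed

lemma cut_cost_le_cover:
  assumes "finite Z"
    and "\<And>u v. (u, v) \<in> A \<Longrightarrow> u \<in> low \<sigma> \<Longrightarrow> v \<in> high \<sigma> \<Longrightarrow> u \<in> Z \<or> v \<in> Z"
  shows "cut_cost \<sigma> (cut \<sigma>) \<le> 2 * card Z"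
proof -
  define Q where "Q = high \<sigma> \<union> (Z \<inter> low \<sigma>)"
  have "Q \<subseteq> V"
    by (auto simp: Q_def high_def low_def)
  have "in_boundary Q \<subseteq> Z"
  proof
    fix v assume "v \<in> in_boundary Q"
    then obtain u where "v \<in> Q" "u \<in> V" "u \<notin> Q" "(u, v) \<in> A"
      by (auto simp: in_boundary_def)
    then show "v \<in> Z"
      using assms(2)[of u v] by (auto simp: Q_def high_def low_def)
  qed
  moreover have "Q \<inter> low \<sigma> \<subseteq> Z" and "high \<sigma> - Q = {}"
    by (auto simp: Q_def high_def low_def)
  ultimately have "cut_cost \<sigma> Q \<le> card Z + card Z"
    unfolding cut_cost_def using card_mono[OF assms(1)] by (metis add_mono card.empty add_0_right)
  then show ?thesis
    using cut_cost_le[OF \<open>Q \<subseteq> V\<close>, of \<sigma>] by linarith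
qed

section \<open>Bounding the optimal costs\<close>

lemma card_matching_le_card_window:
  assumes "matching M" and "M \<subseteq> A"
    and "\<And>e. e \<in> M \<Longrightarrow> \<sigma> \<le> score (fst e) + g \<or> score (snd e) < \<sigma> + g"
    and "\<And>e. e \<in> M \<Longrightarrow> score (fst e) < \<sigma> \<and> \<sigma> \<le> score (snd e)"
  shows "card M \<le> card {v\<in>V. \<sigma> \<le> score v + g \<and> score v < \<sigma> + g}"
proof -
  define end_near where "end_near e = (if score (snd e) < \<sigma> + g then snd e else fst e)" for e
  have "inj_on end_near M"
  proof (rule inj_onI)
    fix e e' assume "e \<in> M" "e' \<in> M" "end_near e = end_near e'"
    moreover have "end_near e \<in> {fst e, snd e}" "end_near e' \<in> {fst e', snd e'}"
      by (simp_all add: end_near_def)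
    ultimately have "{fst e, snd e} \<inter> {fst e', snd e'} \<noteq> {}"
      by auto
    then show "e = e'"
      using assms(1) \<open>e \<in> M\<close> \<open>e' \<in> M\<close> unfolding matching_def by blast
  qed
  moreover have "end_near ` M \<subseteq> {v\<in>V. \<sigma> \<le> score v + g \<and> score v < \<sigma> + g}"
  proof
    fix v assume "v \<in> end_near ` M"
    then obtain e where "e \<in> M" "v = end_near e"
      by blast
    moreover have "fst e \<in> V" "snd e \<in> V"
      using \<open>e \<in> M\<close> assms(2) arcs_subset by auto
    ultimately show "v \<in> {v\<in>V. \<sigma> \<le> score v + g \<and> score v < \<sigma> + g}"
      using assms(3,4)[OF \<open>e \<in> M\<close>] by (auto simp: end_near_def)
  qed
  ultimately show ?thesis
    using finite_V by (intro card_inj_on_le) auto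
qed

lemma linked_if_large_near_matching:
  assumes "matching M" and "M \<subseteq> A"
    and "\<And>e. e \<in> M \<Longrightarrow> score (fst e) < \<sigma> \<and> \<sigma> \<le> score (snd e)"
    and "\<And>e. e \<in> M \<Longrightarrow> \<sigma> \<le> score (fst e) + (N + 2) \<or> score (snd e) < \<sigma> + (N + 2)"
    and "17 * N + 24 \<le> card M"
  obtains J where "J \<subseteq> V" and "linked A J N" and "N \<le> card J"
proof -
  define g where "g = N + 2"
  define W where "W = {v\<in>V. \<sigma> \<le> score v + g \<and> score v < \<sigma> + g}"
  have "card M \<le> card W"
    unfolding W_def by (rule card_matching_le_card_window) (use assms(1-4) in \<open>auto simp: g_def\<close>)
  then have "5 * (2 * g) + 7 * N + 4 \<le> card W" "N \<le> card W"
    using assms(5) by (simp_all add: g_def)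
  moreover have "\<sigma> - g \<le> score v \<and> score v \<le> (\<sigma> - g) + 2 * g" if "v \<in> W" for v
    using that by (auto simp: W_def)
  moreover have "W \<subseteq> V"
    by (auto simp: W_def)
  ultimately have "linked A W N"
    using linked_if_score_window by blast
  then show ?thesis
    using that \<open>W \<subseteq> V\<close> \<open>N \<le> card W\<close> by blast
qed

lemma linked_if_large_crossing_matching:
  assumes "matching M" and "M \<subseteq> A"
    and crossing: "\<And>e. e \<in> M \<Longrightarrow> score (fst e) < \<sigma> \<and> \<sigma> \<le> score (snd e)"
    and "22 * N + 27 \<le> card M"
  obtains J where "J \<subseteq> V" and "linked A J N" and "N \<le> card J"
proof -
  define Far where "Far = {e\<in>M. score (fst e) + (N + 2) < \<sigma> \<and> \<sigma> + (N + 2) \<le> score (snd e)}"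
  have "Far \<subseteq> M"
    by (auto simp: Far_def)
  moreover have "finite M"
    using assms(2) finite_A by (rule finite_subset)
  ultimately have "card (M - Far) = card M - card Far"
    by (simp add: card_Diff_subset finite_subset)
  show ?thesis
  proof (cases "5 * N + 3 \<le> card Far")
    case True
    have "Far \<subseteq> A" "matching Far"
      using \<open>Far \<subseteq> M\<close> assms(2) matching_subset[OF assms(1)] by auto
    moreover have "score u + N + 4 \<le> score x" if "u \<in> fst ` Far" "x \<in> snd ` Far" for u x
      using that by (auto simp: Far_def)
    ultimately obtain J where "J \<subseteq> V" "linked A J N" "card Far + 1 \<le> card J + 4 * N + 4"
      by (rule linked_heads_if_matching_gap)
    then show ?thesis
      using that True by simp
  next
    case False
    show ?thesis
    proof (rule linked_if_large_near_matching)
      show "matching (M - Far)" "M - Far \<subseteq> A"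
        using matching_subset[OF assms(1)] assms(2) by auto
      show "17 * N + 24 \<le> card (M - Far)"
        using False assms(4) \<open>card (M - Far) = card M - card Far\<close> by simp
    qed (use that crossing in \<open>auto simp: Far_def\<close>)
  qed
qed

lemma linked_or_cut_cost_le:
  obtains J where "J \<subseteq> V" and "linked A J N" and "N \<le> card J"
  | "cut_cost \<sigma> (cut \<sigma>) \<le> 88 * N + 104"
proof -
  define E where "E = {e\<in>A. score (fst e) < \<sigma> \<and> \<sigma> \<le> score (snd e)}"
  obtain M where "M \<subseteq> E" "matching M"
    and cover: "\<forall>e\<in>E. {fst e, snd e} \<inter> (fst ` M \<union> snd ` M) \<noteq> {}"
    using maximal_matching_exists[of E] finite_A by (auto simp: E_def)
  show ?thesis
  proof (cases "22 * N + 27 \<le> card M")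
    case True
    then show ?thesis
      using linked_if_large_crossing_matching[OF \<open>matching M\<close>] \<open>M \<subseteq> E\<close> that(1)
      by (auto simp: E_def)
  next
    case False
    have "finite M"
      using \<open>M \<subseteq> E\<close> finite_A by (auto simp: E_def intro: finite_subset)
    then have "card (fst ` M \<union> snd ` M) \<le> 2 * card M"
      using card_Un_le[of "fst ` M" "snd ` M"] card_image_le[of M fst] card_image_le[of M snd]
      by linarith
    moreover have "u \<in> fst ` M \<union> snd ` M \<or> v \<in> fst ` M \<union> snd ` M"
      if "(u, v) \<in> A" "u \<in> low \<sigma>" "v \<in> high \<sigma>" for u v
      using cover that by (auto simp: E_def low_def high_def)
    ultimately have "cut_cost \<sigma> (cut \<sigma>) \<le> 4 * card M"
      using cut_cost_le_cover[of "fst ` M \<union> snd ` M" \<sigma>] \<open>finite M\<close> by auto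
    then show ?thesis
      using False that(2) by linarith
  qed
qed

section \<open>An interval decomposition from the cuts\<close>

definition level :: "'a \<Rightarrow> nat" where
  "level v = Max {\<sigma>. \<sigma> \<le> card V \<and> v \<in> cut \<sigma>}"

lemma mem_cut_iff:
  assumes "v \<in> V"
  shows "v \<in> cut \<sigma> \<longleftrightarrow> \<sigma> \<le> level v"
proof -
  define S where "S = {\<sigma>. \<sigma> \<le> card V \<and> v \<in> cut \<sigma>}"
  have "finite S"
    by (rule finite_subset[of _ "{..card V}"]) (auto simp: S_def)
  moreover have "0 \<in> S"
    using assms cut_0 by (simp add: S_def)
  ultimately have "level v \<in> S" and le_level: "\<And>\<sigma>. \<sigma> \<in> S \<Longrightarrow> \<sigma> \<le> level v"
    unfolding level_def S_def[symmetric] by (auto intro: Max_in)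
  show ?thesis
  proof
    assume "v \<in> cut \<sigma>"
    moreover have "\<sigma> \<le> card V"
      using \<open>v \<in> cut \<sigma>\<close> cut_antimono[of "card V" \<sigma>] cut_card_V
      by (metis empty_iff nat_le_linear subsetD)
    ultimately show "\<sigma> \<le> level v"
      using le_level by (simp add: S_def)
  next
    assume "\<sigma> \<le> level v"
    then show "v \<in> cut \<sigma>"
      using \<open>level v \<in> S\<close> cut_antimono by (auto simp: S_def)
  qed
qed

definition low_level :: "'a \<Rightarrow> nat" where
  "low_level v = Min (level ` insert v (ins v))"

text \<open>
  A vertex lies in cut \<sigma> exactly for \<sigma> \<le> level v; its interval reaches down to the levels of
  its in-neighbours, and negation orients the intervals along the arcs.
\<close>

definition cut_interval :: "'a \<Rightarrow> int \<times> int" where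
  "cut_interval v = (- int (level v), - int (low_level v))"

lemma low_level_le: "u \<in> insert v (ins v) \<Longrightarrow> low_level v \<le> level u"
  using finite_V unfolding low_level_def ins_def by (intro Min_le) auto

lemma low_level_eq: "\<exists>u\<in>insert v (ins v). low_level v = level u"
proof -
  have "low_level v \<in> level ` insert v (ins v)"
    using finite_V unfolding low_level_def ins_def by (intro Min_in) auto
  then show ?thesis
    by auto
qed

lemma interval_decomp_cut_interval: "interval_decomp V A cut_interval"
  unfolding interval_decomp_def
proof (intro conjI ballI impI)
  fix v
  show "fst (cut_interval v) \<le> snd (cut_interval v)"
    using low_level_le[of v v] by (simp add: cut_interval_def)
next
  fix u v assume "u \<in> V" "v \<in> V" "snd (cut_interval u) < fst (cut_interval v)"
  then have "level v < low_level u"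
    by (simp add: cut_interval_def)
  then have "u \<noteq> v" and "v \<notin> ins u"
    using low_level_le[of u u] low_level_le[of v u] by auto
  then show "(u, v) \<in> A"
    using arc_total[OF \<open>v \<in> V\<close> \<open>u \<in> V\<close>] \<open>v \<in> V\<close> by (auto simp: ins_def)
qed

definition cut_bag :: "int \<Rightarrow> 'a set" where
  "cut_bag \<alpha> = {v\<in>V. fst (cut_interval v) \<le> \<alpha> \<and> \<alpha> \<le> snd (cut_interval v)}"

lemma cut_bag_subset:
  "cut_bag (- int \<sigma>) \<subseteq> in_boundary (cut (Suc \<sigma>)) \<union> (high (Suc \<sigma>) - cut (Suc \<sigma>)) \<union>
     (cut \<sigma> \<inter> low \<sigma>) \<union> {v\<in>V. score v = \<sigma>}"
proof
  fix v assume "v \<in> cut_bag (- int \<sigma>)"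
  then have "v \<in> V" "\<sigma> \<le> level v" "low_level v \<le> \<sigma>"
    by (auto simp: cut_bag_def cut_interval_def)
  show "v \<in> in_boundary (cut (Suc \<sigma>)) \<union> (high (Suc \<sigma>) - cut (Suc \<sigma>)) \<union> (cut \<sigma> \<inter> low \<sigma>) \<union>
      {v\<in>V. score v = \<sigma>}"
  proof (cases "level v = \<sigma>")
    case True
    then have "v \<notin> cut (Suc \<sigma>)" "v \<in> cut \<sigma>"
      using mem_cut_iff[OF \<open>v \<in> V\<close>] by auto
    then show ?thesis
      using \<open>v \<in> V\<close> by (auto simp: high_def low_def)
  next
    case False
    then have "v \<in> cut (Suc \<sigma>)"
      using mem_cut_iff[OF \<open>v \<in> V\<close>] \<open>\<sigma> \<le> level v\<close> by simp
    obtain u where "u \<in> insert v (ins v)" "low_level v = level u"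
      using low_level_eq by blast
    then have "u \<in> ins v"
      using False \<open>\<sigma> \<le> level v\<close> \<open>low_level v \<le> \<sigma>\<close> by auto
    then have "u \<in> V" "(u, v) \<in> A" "u \<notin> cut (Suc \<sigma>)"
      using mem_cut_iff \<open>low_level v = level u\<close> \<open>low_level v \<le> \<sigma>\<close> by (auto simp: ins_def)
    then show ?thesis
      using \<open>v \<in> cut (Suc \<sigma>)\<close> by (auto simp: in_boundary_def)
  qed
qed

lemma card_cut_bag_le:
  "card (cut_bag (- int \<sigma>)) \<le>
     cut_cost (Suc \<sigma>) (cut (Suc \<sigma>)) + cut_cost \<sigma> (cut \<sigma>) + card {v\<in>V. score v = \<sigma>}"
proof -
  have "in_boundary (cut (Suc \<sigma>)) \<union> (high (Suc \<sigma>) - cut (Suc \<sigma>)) \<union> (cut \<sigma> \<inter> low \<sigma>) \<union>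
      {v\<in>V. score v = \<sigma>} \<subseteq> V"
    using cut_subset by (auto simp: in_boundary_def high_def low_def)
  then have "card (cut_bag (- int \<sigma>)) \<le> card (in_boundary (cut (Suc \<sigma>)) \<union>
      (high (Suc \<sigma>) - cut (Suc \<sigma>)) \<union> (cut \<sigma> \<inter> low \<sigma>) \<union> {v\<in>V. score v = \<sigma>})"
    using finite_subset[OF _ finite_V] cut_bag_subset by (intro card_mono) auto
  also have "\<dots> \<le> card (in_boundary (cut (Suc \<sigma>))) + card (high (Suc \<sigma>) - cut (Suc \<sigma>)) +
      card (cut \<sigma> \<inter> low \<sigma>) + card {v\<in>V. score v = \<sigma>}"
    by (meson card_Un_le add_le_mono le_trans order_refl)
  also have "\<dots> \<le> cut_cost (Suc \<sigma>) (cut (Suc \<sigma>)) + cut_cost \<sigma> (cut \<sigma>) + card {v\<in>V. score v = \<sigma>}"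
    by (simp add: cut_cost_def)
  finally show ?thesis .
qed

lemma pathwidth_le_cut_costs:
  assumes "\<And>\<sigma>. cut_cost \<sigma> (cut \<sigma>) \<le> F" and "\<And>c. card {v\<in>V. score v = c} \<le> q"
  shows "pathwidth V A \<le> 2 * F + q"
proof (rule pathwidth_le[OF finite_V interval_decomp_cut_interval])
  fix \<alpha> :: int
  show "card {v\<in>V. fst (cut_interval v) \<le> \<alpha> \<and> \<alpha> \<le> snd (cut_interval v)} \<le> 2 * F + q"
  proof (cases "0 < \<alpha>")
    case True
    then show ?thesis
      by (simp add: cut_interval_def)
  next
    case False
    define \<sigma> where "\<sigma> = nat (- \<alpha>)"
    have "\<alpha> = - int \<sigma>"
      using False by (simp add: \<sigma>_def)
    show ?thesis
      unfolding \<open>\<alpha> = - int \<sigma>\<close>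
      using card_cut_bag_le[of \<sigma>, unfolded cut_bag_def] assms(1)[of \<sigma>] assms(1)[of "Suc \<sigma>"]
        assms(2)[of \<sigma>]
      by linarith
  qed
qed

lemma pathwidth_le_if_linked_sets_small:
  assumes small: "\<And>J. J \<subseteq> V \<Longrightarrow> linked A J N \<Longrightarrow> card J < N" and "3 \<le> N"
  shows "pathwidth V A \<le> 254 * N"
proof -
  have "cut_cost \<sigma> (cut \<sigma>) \<le> 88 * N + 104" for \<sigma>
  proof (rule linked_or_cut_cost_le[where N = N and \<sigma> = \<sigma>])
    fix J assume "J \<subseteq> V" "linked A J N" "N \<le> card J"
    then show ?thesis
      using small[of J] by linarith
  qed
  moreover have "card {v\<in>V. score v = c} \<le> 7 * N + 3" for c
  proof (rule ccontr)
    assume large: "\<not> card {v\<in>V. score v = c} \<le> 7 * N + 3"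
    then have "linked A {v\<in>V. score v = c} N"
      by (intro linked_if_score_window[where a = c and l = 0]) auto
    then show False
      using small[of "{v\<in>V. score v = c}"] large by auto
  qed
  ultimately have "pathwidth V A \<le> 2 * (88 * N + 104) + (7 * N + 3)"
    by (rule pathwidth_le_cut_costs)
  also have "\<dots> \<le> 254 * N"
    using \<open>3 \<le> N\<close> by simp
  finally show ?thesis .
qed

lemma pathwidth_le_if_no_disjoint_copies:
  assumes H: "simple_digraph VH AH" and "0 < k" and no_copies: "\<not> has_k_disjoint_copies VH AH k V A"
  shows "pathwidth V A \<le> 762 * (k * (card VH + card AH))"
proof -
  define N where "N = 3 * k * (card VH + card AH)"
  have "VH \<noteq> {}"
  proof
    assume "VH = {}"
    moreover from this have "AH = {}"
      using H by (auto simp: simple_digraph_def)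
    ultimately show False
      using no_copies by (simp add: has_k_disjoint_copies_empty)
  qed
  then have "3 \<le> N"
    using H \<open>0 < k\<close> by (auto simp: N_def simple_digraph_def card_gt_0_iff Suc_le_eq)
  have "card J < N" if "J \<subseteq> V" "linked A J N" for J
  proof (rule ccontr)
    assume "\<not> card J < N"
    then have "k * card VH \<le> card J"
      by (simp add: N_def algebra_simps)
    then show False
      using has_k_disjoint_copies_if_linked[OF H \<open>linked A J N\<close> arcs_subset \<open>J \<subseteq> V\<close>]
        finite_subset[OF \<open>J \<subseteq> V\<close> finite_V] no_copies by (simp add: N_def)
  qed
  then have "pathwidth V A \<le> 254 * N"
    using \<open>3 \<le> N\<close> by (rule pathwidth_le_if_linked_sets_small)
  then show ?thesis
    by (simp add: N_def)
qed

end

theorem corollary10: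
  shows "\<exists>d::real. \<forall>(VH :: nat set) (AH :: (nat \<times> nat) set) (k :: nat)
            (VT :: nat set) (AT :: (nat \<times> nat) set).
     simple_digraph VH AH \<and> 0 < k \<and> tournament VT AT \<and>
     \<not> has_k_disjoint_copies VH AH k VT AT \<longrightarrow>
     real (pathwidth VT AT) \<le> d * real (card VH + card AH) * real k"
proof (intro exI[of _ 762] allI impI, elim conjE)
  fix VH :: "nat set" and AH :: "(nat \<times> nat) set" and k :: nat
    and VT :: "nat set" and AT :: "(nat \<times> nat) set"
  assume "simple_digraph VH AH" "0 < k" "tournament VT AT" "\<not> has_k_disjoint_copies VH AH k VT AT"
  then have "real (pathwidth VT AT) \<le> real (762 * (k * (card VH + card AH)))"
    unfolding of_nat_le_iff
    by (intro tournament_digraph.pathwidth_le_if_no_disjoint_copies tournament_digraph.intro)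
  then show "real (pathwidth VT AT) \<le> 762 * real (card VH + card AH) * real k"
    by (simp add: algebra_simps)
qed

end
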